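(* If $A\in\{0,1\}^{n\times m}$ is a binary matrix, then its Boolean (Schein/Barvinok) rank equals its subtropical (Schein/Barvinok) rank.
   Context: $\mathbb{R}_+=[0,\infty)$. The max-times product of $B\in\mathbb{R}_+^{n\times k}$, $C\in\mathbb{R}_+^{k\times m}$ is $(B\boxtimes C)_{ij}=\max_{s=1}^{k} B_{is}C_{sj}$; the subtropical rank of $A\in\mathbb{R}_+^{n\times m}$ is the least $k$ such that $A=B\boxtimes C$ for some $B\in\mathbb{R}_+^{n\times k}$, $C\in\mathbb{R}_+^{k\times m}$. The Boolean product of binary matrices $B\in\{0,1\}^{n\times k}$, $C\in\{0,1\}^{k\times m}$ is $(B\circ C)_{ij}=\bigvee_{l=1}^k B_{il}C_{lj}$; the Boolean rank of a binary matrix $A$ is the least $k$ such that $A=B\circ C$ for some binary $B\in\{0,1\}^{n\times k}$, $C\in\{0,1\}^{k\times m}$. *)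

theory Defs
  imports Complex_Main
begin

(* Matrices of size n x m are represented as functions nat => nat => 'a,
   only entries with i < n, j < m are relevant. *)

definition maxtimes_prod :: "nat \<Rightarrow> (nat \<Rightarrow> nat \<Rightarrow> real) \<Rightarrow> (nat \<Rightarrow> nat \<Rightarrow> real) \<Rightarrow> nat \<Rightarrow> nat \<Rightarrow> real" where
  "maxtimes_prod k B C i j = (if k = 0 then 0 else Max ((\<lambda>s. B i s * C s j) ` {..<k}))"

definition bool_prod :: "nat \<Rightarrow> (nat \<Rightarrow> nat \<Rightarrow> bool) \<Rightarrow> (nat \<Rightarrow> nat \<Rightarrow> bool) \<Rightarrow> nat \<Rightarrow> nat \<Rightarrow> bool" where
  "bool_prod k B C i j = (\<exists>l<k. B i l \<and> C l j)"

definition subtropical_rank :: "nat \<Rightarrow> nat \<Rightarrow> (nat \<Rightarrow> nat \<Rightarrow> real) \<Rightarrow> nat" where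
  "subtropical_rank n m A = (LEAST k. \<exists>B C.
      (\<forall>i<n. \<forall>s<k. B i s \<ge> 0) \<and> (\<forall>s<k. \<forall>j<m. C s j \<ge> 0) \<and>
      (\<forall>i<n. \<forall>j<m. A i j = maxtimes_prod k B C i j))"

definition boolean_rank :: "nat \<Rightarrow> nat \<Rightarrow> (nat \<Rightarrow> nat \<Rightarrow> bool) \<Rightarrow> nat" where
  "boolean_rank n m A = (LEAST k. \<exists>B C. \<forall>i<n. \<forall>j<m. A i j = bool_prod k B C i j)"

end

theory Submission
  imports Defs
begin

text \<open>A nonnegative max-times factorization of a 0/1 matrix yields a Boolean factorization of
  the same width by taking the support patterns of its factors, since a max of nonnegative products
  is positive exactly when some product has both factors positive. Conversely the indicator matrices
  of a Boolean factorization multiply, in max-times arithmetic, to the indicator of the Boolean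
  product. Hence the same widths are attainable in both settings and the least ones agree.\<close>

lemma maxtimes_prod_pos_iff:
  fixes B C :: "nat \<Rightarrow> nat \<Rightarrow> real"
  assumes "\<forall>s<k. B i s \<ge> 0" and "\<forall>s<k. C s j \<ge> 0"
  shows "maxtimes_prod k B C i j > 0 \<longleftrightarrow> (\<exists>s<k. B i s > 0 \<and> C s j > 0)"
proof (cases "k = 0")
  case True
  then show ?thesis by (simp add: maxtimes_prod_def)
next
  case False
  have "0 < Max ((\<lambda>s. B i s * C s j) ` {..<k}) \<longleftrightarrow>
      (\<exists>a\<in>(\<lambda>s. B i s * C s j) ` {..<k}. 0 < a)"
    using False by (intro Max_gr_iff) auto
  then have "maxtimes_prod k B C i j > 0 \<longleftrightarrow> (\<exists>s<k. B i s * C s j > 0)"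
    using False by (auto simp: maxtimes_prod_def)
  also have "\<dots> \<longleftrightarrow> (\<exists>s<k. B i s > 0 \<and> C s j > 0)"
    using assms by (metis less_eq_real_def mult_pos_pos mult_eq_0_iff)
  finally show ?thesis .
qed

lemma maxtimes_prod_of_bool:
  "maxtimes_prod k (\<lambda>i s. of_bool (B i s)) (\<lambda>s j. of_bool (C s j)) i j
     = of_bool (bool_prod k B C i j)"
proof (cases "bool_prod k B C i j")
  case True
  then obtain l where l: "l < k" "B i l" "C l j" by (auto simp: bool_prod_def)
  let ?P = "(\<lambda>s. of_bool (B i s) * of_bool (C s j) :: real) ` {..<k}"
  have "Max ?P = 1"
    using l by (intro Max_eqI) auto
  with l show ?thesis by (simp add: maxtimes_prod_def True)
next
  case False
  then have "\<forall>s<k. of_bool (B i s) * of_bool (C s j) = (0::real)"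
    by (auto simp: bool_prod_def)
  then show ?thesis
    by (auto simp: maxtimes_prod_def False image_iff intro!: Max_eqI)
qed

lemma subtropical_factorization_of_boolean:
  assumes A01: "\<forall>i<n. \<forall>j<m. A i j \<in> {0, 1}"
    and factor: "\<forall>i<n. \<forall>j<m. (A i j = 1) = bool_prod k B C i j"
  shows "\<exists>B' C'. (\<forall>i<n. \<forall>s<k. B' i s \<ge> 0) \<and> (\<forall>s<k. \<forall>j<m. C' s j \<ge> 0) \<and>
    (\<forall>i<n. \<forall>j<m. A i j = maxtimes_prod k B' C' i j)"
proof (intro exI conjI)
  show "\<forall>i<n. \<forall>j<m. A i j = maxtimes_prod k (\<lambda>i s. of_bool (B i s)) (\<lambda>s j. of_bool (C s j)) i j"
    using A01 factor by (auto simp: maxtimes_prod_of_bool)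
qed auto

lemma boolean_factorization_of_subtropical:
  fixes A B C :: "nat \<Rightarrow> nat \<Rightarrow> real"
  assumes A01: "\<forall>i<n. \<forall>j<m. A i j \<in> {0, 1}"
    and B: "\<forall>i<n. \<forall>s<k. B i s \<ge> 0" and C: "\<forall>s<k. \<forall>j<m. C s j \<ge> 0"
    and factor: "\<forall>i<n. \<forall>j<m. A i j = maxtimes_prod k B C i j"
  shows "\<forall>i<n. \<forall>j<m. (A i j = 1) = bool_prod k (\<lambda>i s. B i s > 0) (\<lambda>s j. C s j > 0) i j"
proof (intro allI impI)
  fix i j assume ij: "i < n" "j < m"
  have "A i j \<in> {0, 1}" and "A i j = maxtimes_prod k B C i j"
    using A01 factor ij by simp_all
  then have "A i j = 1 \<longleftrightarrow> maxtimes_prod k B C i j > 0"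
    by auto
  also have "\<dots> \<longleftrightarrow> bool_prod k (\<lambda>i s. B i s > 0) (\<lambda>s j. C s j > 0) i j"
    using B C ij by (simp add: maxtimes_prod_pos_iff bool_prod_def)
  finally show "(A i j = 1) = bool_prod k (\<lambda>i s. B i s > 0) (\<lambda>s j. C s j > 0) i j" .
qed

theorem lemma1:
  fixes n m :: nat and A :: "nat \<Rightarrow> nat \<Rightarrow> real"
  assumes "\<forall>i<n. \<forall>j<m. A i j \<in> {0, 1}"
  shows "boolean_rank n m (\<lambda>i j. A i j = 1) = subtropical_rank n m A"
proof -
  have same_widths: "(\<exists>B C. \<forall>i<n. \<forall>j<m. (A i j = 1) = bool_prod k B C i j) \<longleftrightarrow>
    (\<exists>B C. (\<forall>i<n. \<forall>s<k. B i s \<ge> 0) \<and> (\<forall>s<k. \<forall>j<m. C s j \<ge> 0) \<and>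
      (\<forall>i<n. \<forall>j<m. A i j = maxtimes_prod k B C i j))" for k
  proof
    assume "\<exists>B C. \<forall>i<n. \<forall>j<m. (A i j = 1) = bool_prod k B C i j"
    then obtain B C where "\<forall>i<n. \<forall>j<m. (A i j = 1) = bool_prod k B C i j" by blast
    then show "\<exists>B C. (\<forall>i<n. \<forall>s<k. B i s \<ge> 0) \<and> (\<forall>s<k. \<forall>j<m. C s j \<ge> 0) \<and>
      (\<forall>i<n. \<forall>j<m. A i j = maxtimes_prod k B C i j)"
      by (rule subtropical_factorization_of_boolean[OF assms])
  next
    assume "\<exists>B C. (\<forall>i<n. \<forall>s<k. B i s \<ge> 0) \<and> (\<forall>s<k. \<forall>j<m. C s j \<ge> 0) \<and>
      (\<forall>i<n. \<forall>j<m. A i j = maxtimes_prod k B C i j)"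
    then obtain B C where "\<forall>i<n. \<forall>s<k. B i s \<ge> 0" "\<forall>s<k. \<forall>j<m. C s j \<ge> 0"
      "\<forall>i<n. \<forall>j<m. A i j = maxtimes_prod k B C i j" by blast
    from boolean_factorization_of_subtropical[OF assms this]
    show "\<exists>B C. \<forall>i<n. \<forall>j<m. (A i j = 1) = bool_prod k B C i j" by blast
  qed
  show ?thesis
    unfolding boolean_rank_def subtropical_rank_def by (simp only: same_widths)
qed

end
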